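(* Assume (A1) and (A2) below. For a policy $\pi$, let $W_t^\pi$ be the solution of $$W_t^\pi(s)=\gamma^2w_t(s)+\gamma^2\sum_{a,s'}\pi(a\mid s)\bar p_t(s'\mid s,a)W_t^\pi(s'),\qquad w_t(s)=\mathbb{V}_{p\sim\Phi_t}\Big[\sum_{a,s'}\pi(a\mid s)p(s'\mid s,a)\bar V^\pi_t(s')\Big].$$ Then for every $s\in\mathcal S$, $W_t^\pi(s)\ge U_t^\pi(s)$, where $U_t^\pi(s)=\mathbb{V}_{p\sim\Phi_t}\big[V^{\pi,p}(s)\big]$.
   Context: Let $\mathcal S$ be a finite state space, $\mathcal A$ a finite action space, $r:\mathcal S\times\mathcal A\to\mathbb R$ a known bounded (deterministic) reward function and $\gamma\in[0,1)$ a discount factor. A transition function $p$ assigns to each $(s,a)$ a probability distribution $p(\cdot\mid s,a)$ on $\mathcal S$. A policy $\pi$ gives distributions $\pi(\cdot\mid s)$ on $\mathcal A$. For a transition function $p$, the value function is $V^{\pi,p}(s)=\mathbb E\big[\sum_{h\ge 0}\gamma^h r(s_h,a_h)\mid s_0=s\big]$ with $a_h\sim\pi(\cdot\mid s_h)$, $s_{h+1}\sim p(\cdot\mid s_h,a_h)$. The transition function $p$ is a random variable with (posterior) distribution $\Phi_t$. Define $\bar p_t(s'\mid s,a)=\mathbb E_{p\sim\Phi_t}[p(s'\mid s,a)]$ and $\bar V^\pi_t(s)=\mathbb E_{p\sim\Phi_t}[V^{\pi,p}(s)]$. Assumptions: (A1) (independent transitions) $p(s'\mid x,a)$ and $p(s'\mid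 y,a)$ are independent random variables if $x\neq y$; (A2) (acyclic MDP) the MDP is a directed acyclic graph, i.e., states are not visited more than once in any given episode. *)

theory Defs
  imports "HOL-Probability.Probability"
begin

text \<open>Finite MDP with state type 's and action type 'a (both finite).
  A transition function p is encoded as p s a s' = p(s' | s, a);
  a policy pi as pi s a = pi(a | s); a reward function as r s a.\<close>

definition is_transition :: "('s::finite \<Rightarrow> 'a::finite \<Rightarrow> 's \<Rightarrow> real) \<Rightarrow> bool" where
  "is_transition p \<longleftrightarrow> (\<forall>s a. (\<forall>s'. 0 \<le> p s a s') \<and> (\<Sum>s'\<in>UNIV. p s a s') = 1)"

definition is_policy :: "('s::finite \<Rightarrow> 'a::finite \<Rightarrow> real) \<Rightarrow> bool" where
  "is_policy \<pi> \<longleftrightarrow> (\<forall>s. (\<forall>a. 0 \<le> \<pi> s a) \<and> (\<Sum>a\<in>UNIV. \<pi> s a) = 1)"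

fun state_dist :: "('s::finite \<Rightarrow> 'a::finite \<Rightarrow> real) \<Rightarrow> ('s \<Rightarrow> 'a \<Rightarrow> 's \<Rightarrow> real)
    \<Rightarrow> 's \<Rightarrow> nat \<Rightarrow> 's \<Rightarrow> real" where
  "state_dist \<pi> p s 0 = (\<lambda>x. if x = s then 1 else 0)"
| "state_dist \<pi> p s (Suc h) =
     (\<lambda>y. \<Sum>x\<in>UNIV. state_dist \<pi> p s h x * (\<Sum>a\<in>UNIV. \<pi> x a * p x a y))"

text \<open>V^{pi,p}(s) = E[ sum_h gamma^h r(s_h,a_h) | s_0 = s ], the expectation of each
  summand written out via the state distribution at step h.\<close>
definition value_fun :: "real \<Rightarrow> ('s::finite \<Rightarrow> 'a::finite \<Rightarrow> real) \<Rightarrow> ('s \<Rightarrow> 'a \<Rightarrow> real)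
    \<Rightarrow> ('s \<Rightarrow> 'a \<Rightarrow> 's \<Rightarrow> real) \<Rightarrow> 's \<Rightarrow> real" where
  "value_fun \<gamma> r \<pi> p s =
     (\<Sum>h. \<gamma> ^ h * (\<Sum>x\<in>UNIV. state_dist \<pi> p s h x * (\<Sum>a\<in>UNIV. \<pi> x a * r x a)))"

definition var_of :: "'w measure \<Rightarrow> ('w \<Rightarrow> real) \<Rightarrow> real" where
  "var_of M X = (\<integral>\<omega>. (X \<omega> - (\<integral>\<omega>'. X \<omega>' \<partial>M))\<^sup>2 \<partial>M)"

definition mean_trans :: "'w measure \<Rightarrow> ('w \<Rightarrow> 's \<Rightarrow> 'a \<Rightarrow> 's \<Rightarrow> real) \<Rightarrow> 's \<Rightarrow> 'a \<Rightarrow> 's \<Rightarrow> real" where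
  "mean_trans M P s a s' = (\<integral>\<omega>. P \<omega> s a s' \<partial>M)"

definition mean_value :: "'w measure \<Rightarrow> ('w \<Rightarrow> 's::finite \<Rightarrow> 'a::finite \<Rightarrow> 's \<Rightarrow> real) \<Rightarrow> real
    \<Rightarrow> ('s \<Rightarrow> 'a \<Rightarrow> real) \<Rightarrow> ('s \<Rightarrow> 'a \<Rightarrow> real) \<Rightarrow> 's \<Rightarrow> real" where
  "mean_value M P \<gamma> r \<pi> s = (\<integral>\<omega>. value_fun \<gamma> r \<pi> (P \<omega>) s \<partial>M)"

definition local_unc :: "'w measure \<Rightarrow> ('w \<Rightarrow> 's::finite \<Rightarrow> 'a::finite \<Rightarrow> 's \<Rightarrow> real) \<Rightarrow> real
    \<Rightarrow> ('s \<Rightarrow> 'a \<Rightarrow> real) \<Rightarrow> ('s \<Rightarrow> 'a \<Rightarrow> real) \<Rightarrow> 's \<Rightarrow> real" where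
  "local_unc M P \<gamma> r \<pi> s =
     var_of M (\<lambda>\<omega>. \<Sum>a\<in>UNIV. \<Sum>s'\<in>UNIV. \<pi> s a * P \<omega> s a s' * mean_value M P \<gamma> r \<pi> s')"

definition value_var :: "'w measure \<Rightarrow> ('w \<Rightarrow> 's::finite \<Rightarrow> 'a::finite \<Rightarrow> 's \<Rightarrow> real) \<Rightarrow> real
    \<Rightarrow> ('s \<Rightarrow> 'a \<Rightarrow> real) \<Rightarrow> ('s \<Rightarrow> 'a \<Rightarrow> real) \<Rightarrow> 's \<Rightarrow> real" where
  "value_var M P \<gamma> r \<pi> s = var_of M (\<lambda>\<omega>. value_fun \<gamma> r \<pi> (P \<omega>) s)"

text \<open>(A2) Acyclic (episodic) MDP: apart from a set T of terminal states (absorbing, reward 0,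
  i.e. the episode has ended), every transition with positive probability strictly decreases
  a fixed rank function rk, so no non-terminal state is visited twice in an episode.\<close>
definition acyclic_mdp :: "'s set \<Rightarrow> ('s \<Rightarrow> nat) \<Rightarrow> ('s \<Rightarrow> 'a \<Rightarrow> real)
    \<Rightarrow> ('s \<Rightarrow> 'a \<Rightarrow> 's \<Rightarrow> real) \<Rightarrow> bool" where
  "acyclic_mdp T rk r p \<longleftrightarrow>
     (\<forall>s a. (s \<in> T \<longrightarrow> r s a = 0 \<and> p s a s = 1) \<and>
            (s \<notin> T \<longrightarrow> (\<forall>s'. 0 < p s a s' \<longrightarrow> rk s' < rk s)))"

end

theory Submission
  imports Defs
begin

text \<open>
  For a transition function p let q_p(s,y) = \<Sum>_a \<pi>(a|s) p(y|s,a) be the state kernel of \<pi>.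
  At a non-terminal state s the Bellman equation V^p(s) = r_\<pi>(s) + \<gamma> \<Sum>_y q_p(s,y) V^p(y)
  involves the row p(\<cdot>|s,\<cdot>) only through q_p(s,\<cdot>): by acyclicity the values V^p(y) at the
  successors y of s do not depend on that row, so by (A1) they are independent of q_p(s,\<cdot>).
  Conditioning on the row (law of total variance) and applying Jensen's inequality to the convex
  combination over y gives U(s) \<le> \<gamma>^2 w(s) + \<gamma>^2 \<Sum>_y q_m(s,y) U(y), where m = E[p] is the
  posterior mean transition function. Hence U is a subsolution of the linear equation solved by W,
  and since \<gamma>^2 < 1 and q_m is stochastic, a minimum principle applied to W - U gives U \<le> W.
\<close>

section \<open>Value functions of a fixed MDP\<close>

definition policy_kernel :: "('s \<Rightarrow> 'a::finite \<Rightarrow> real) \<Rightarrow> ('s \<Rightarrow> 'a \<Rightarrow> 's \<Rightarrow> real) \<Rightarrow> 's \<Rightarrow> 's \<Rightarrow> real"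
  where "policy_kernel \<pi> p x y = (\<Sum>a\<in>UNIV. \<pi> x a * p x a y)"

definition policy_reward :: "('s \<Rightarrow> 'a::finite \<Rightarrow> real) \<Rightarrow> ('s \<Rightarrow> 'a \<Rightarrow> real) \<Rightarrow> 's \<Rightarrow> real"
  where "policy_reward \<pi> r x = (\<Sum>a\<in>UNIV. \<pi> x a * r x a)"

lemma sum_policy_kernel:
  "(\<Sum>a\<in>UNIV. \<Sum>y\<in>UNIV. \<pi> x a * p x a y * f y) = (\<Sum>y\<in>UNIV. policy_kernel \<pi> p x y * (f y :: real))"
  unfolding policy_kernel_def by (subst sum.swap) (simp add: sum_distrib_right)

lemma policy_kernel_nonneg: "is_policy \<pi> \<Longrightarrow> is_transition p \<Longrightarrow> 0 \<le> policy_kernel \<pi> p x y"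
  unfolding policy_kernel_def is_policy_def is_transition_def by (auto intro!: sum_nonneg)

lemma sum_policy_kernel_eq_1:
  assumes "is_policy \<pi>" "is_transition p"
  shows "(\<Sum>y\<in>UNIV. policy_kernel \<pi> p x y) = 1"
proof -
  have "(\<Sum>y\<in>UNIV. policy_kernel \<pi> p x y) = (\<Sum>a\<in>UNIV. \<pi> x a * (\<Sum>y\<in>UNIV. p x a y))"
    unfolding policy_kernel_def sum_distrib_left by (rule sum.swap)
  then show ?thesis using assms by (simp add: is_policy_def is_transition_def)
qed

lemma transition_le_1:
  assumes "is_transition p"
  shows "p x a y \<le> 1"
proof -
  have "p x a y \<le> (\<Sum>z\<in>UNIV. p x a z)"
    using assms by (intro member_le_sum) (auto simp: is_transition_def)
  then show ?thesis using assms by (simp add: is_transition_def)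
qed

lemma state_dist_Suc_last_step:
  "state_dist \<pi> p s (Suc h) y = (\<Sum>x\<in>UNIV. state_dist \<pi> p s h x * policy_kernel \<pi> p x y)"
  by (simp add: policy_kernel_def)

declare state_dist.simps(2) [simp del]

lemma state_dist_nonneg: "is_policy \<pi> \<Longrightarrow> is_transition p \<Longrightarrow> 0 \<le> state_dist \<pi> p s h x"
  by (induction h arbitrary: x)
     (auto simp: state_dist_Suc_last_step
           intro!: sum_nonneg mult_nonneg_nonneg policy_kernel_nonneg)

lemma sum_state_dist_eq_1:
  assumes "is_policy \<pi>" "is_transition p"
  shows "(\<Sum>x\<in>UNIV. state_dist \<pi> p s h x) = 1"
proof (induction h)
  case (Suc h)
  have "(\<Sum>y\<in>UNIV. state_dist \<pi> p s (Suc h) y)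
      = (\<Sum>x\<in>UNIV. state_dist \<pi> p s h x * (\<Sum>y\<in>UNIV. policy_kernel \<pi> p x y))"
    unfolding state_dist_Suc_last_step sum_distrib_left by (rule sum.swap)
  then show ?case using Suc by (simp add: sum_policy_kernel_eq_1[OF assms])
qed simp

lemma state_dist_le_1:
  assumes "is_policy \<pi>" "is_transition p"
  shows "state_dist \<pi> p s h x \<le> 1"
proof -
  have "state_dist \<pi> p s h x \<le> (\<Sum>x\<in>UNIV. state_dist \<pi> p s h x)"
    by (rule member_le_sum) (auto intro: state_dist_nonneg[OF assms])
  then show ?thesis by (simp add: sum_state_dist_eq_1[OF assms])
qed

lemma state_dist_Suc_first_step:
  "state_dist \<pi> p s (Suc h) z = (\<Sum>y\<in>UNIV. policy_kernel \<pi> p s y * state_dist \<pi> p y h z)"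
proof (induction h arbitrary: z)
  case 0
  show ?case
    by (simp add: state_dist_Suc_last_step if_distrib[of "\<lambda>t. t * _"] if_distrib[of "\<lambda>t. _ * t"]
        cong: if_cong)
next
  case (Suc h)
  have "state_dist \<pi> p s (Suc (Suc h)) z
      = (\<Sum>x\<in>UNIV. \<Sum>y\<in>UNIV. policy_kernel \<pi> p s y * (state_dist \<pi> p y h x * policy_kernel \<pi> p x z))"
    by (simp add: state_dist_Suc_last_step[of _ _ _ "Suc h"] Suc sum_distrib_right mult.assoc)
  also have "\<dots> = (\<Sum>y\<in>UNIV. policy_kernel \<pi> p s y * state_dist \<pi> p y (Suc h) z)"
    by (subst sum.swap) (simp add: state_dist_Suc_last_step sum_distrib_left)
  finally show ?case .
qed

definition expected_reward :: "('s::finite \<Rightarrow> 'a::finite \<Rightarrow> real) \<Rightarrow> ('s \<Rightarrow> 'a \<Rightarrow> real)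
    \<Rightarrow> ('s \<Rightarrow> 'a \<Rightarrow> 's \<Rightarrow> real) \<Rightarrow> 's \<Rightarrow> nat \<Rightarrow> real"
  where "expected_reward \<pi> r p s h = (\<Sum>x\<in>UNIV. state_dist \<pi> p s h x * policy_reward \<pi> r x)"

lemma value_fun_eq_suminf: "value_fun \<gamma> r \<pi> p s = (\<Sum>h. \<gamma> ^ h * expected_reward \<pi> r p s h)"
  unfolding value_fun_def expected_reward_def policy_reward_def ..

lemma abs_expected_reward_le:
  assumes "is_policy \<pi>" "is_transition p"
  shows "\<bar>expected_reward \<pi> r p s h\<bar> \<le> (\<Sum>x\<in>UNIV. \<bar>policy_reward \<pi> r x\<bar>)"
  unfolding expected_reward_def
  using state_dist_nonneg[OF assms] state_dist_le_1[OF assms]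
  by (intro order_trans[OF sum_abs] sum_mono) (simp add: abs_mult mult_left_le_one_le)

lemma
  assumes "is_policy \<pi>" "is_transition p" "0 \<le> \<gamma>" "\<gamma> < 1"
  shows summable_discounted_reward: "summable (\<lambda>h. \<gamma> ^ h * expected_reward \<pi> r p s h)"
    and abs_value_fun_le: "\<bar>value_fun \<gamma> r \<pi> p s\<bar> \<le> (\<Sum>x\<in>UNIV. \<bar>policy_reward \<pi> r x\<bar>) / (1 - \<gamma>)"
proof -
  define R where "R = (\<Sum>x\<in>UNIV. \<bar>policy_reward \<pi> r x\<bar>)"
  have bound: "norm (\<gamma> ^ h * expected_reward \<pi> r p s h) \<le> \<gamma> ^ h * R" for h
    using abs_expected_reward_le[OF assms(1,2)] assms(3)
    by (simp add: R_def abs_mult mult_left_mono)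
  have geometric: "(\<lambda>h. \<gamma> ^ h * R) sums (R / (1 - \<gamma>))"
    using sums_mult2[OF geometric_sums, of \<gamma> R] assms(3,4) by (simp add: field_simps)
  show "summable (\<lambda>h. \<gamma> ^ h * expected_reward \<pi> r p s h)"
    using summable_comparison_test'[OF sums_summable[OF geometric] bound] .
  show "\<bar>value_fun \<gamma> r \<pi> p s\<bar> \<le> (\<Sum>x\<in>UNIV. \<bar>policy_reward \<pi> r x\<bar>) / (1 - \<gamma>)"
    using norm_suminf_le[OF bound sums_summable[OF geometric]] sums_unique[OF geometric]
    by (simp add: value_fun_eq_suminf R_def)
qed

lemma bellman_equation:
  assumes "is_policy \<pi>" "is_transition p" "0 \<le> \<gamma>" "\<gamma> < 1"
  shows "value_fun \<gamma> r \<pi> p s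
    = policy_reward \<pi> r s + \<gamma> * (\<Sum>y\<in>UNIV. policy_kernel \<pi> p s y * value_fun \<gamma> r \<pi> p y)"
proof -
  note summable = summable_discounted_reward[OF assms, of r]
  have shift: "\<gamma> ^ Suc h * expected_reward \<pi> r p s (Suc h)
      = (\<Sum>y\<in>UNIV. \<gamma> * policy_kernel \<pi> p s y * (\<gamma> ^ h * expected_reward \<pi> r p y h))" for h
  proof -
    have "expected_reward \<pi> r p s (Suc h)
        = (\<Sum>y\<in>UNIV. policy_kernel \<pi> p s y * expected_reward \<pi> r p y h)"
      unfolding expected_reward_def state_dist_Suc_first_step sum_distrib_right sum_distrib_left
      by (subst sum.swap) (simp add: mult.assoc)
    then show ?thesis by (simp add: sum_distrib_left mult_ac)
  qed
  have "value_fun \<gamma> r \<pi> p s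
      = expected_reward \<pi> r p s 0 + (\<Sum>h. \<gamma> ^ Suc h * expected_reward \<pi> r p s (Suc h))"
    unfolding value_fun_eq_suminf using suminf_split_head[OF summable] by simp
  also have "expected_reward \<pi> r p s 0 = policy_reward \<pi> r s"
    by (simp add: expected_reward_def if_distrib[of "\<lambda>t. t * _"] cong: if_cong)
  also have "(\<Sum>h. \<gamma> ^ Suc h * expected_reward \<pi> r p s (Suc h))
      = (\<Sum>y\<in>UNIV. \<Sum>h. \<gamma> * policy_kernel \<pi> p s y * (\<gamma> ^ h * expected_reward \<pi> r p y h))"
    unfolding shift by (rule suminf_sum) (intro summable_mult summable)
  also have "\<dots> = (\<Sum>y\<in>UNIV. \<gamma> * policy_kernel \<pi> p s y * value_fun \<gamma> r \<pi> p y)"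
    by (simp only: suminf_mult[OF summable] value_fun_eq_suminf)
  also have "\<dots> = \<gamma> * (\<Sum>y\<in>UNIV. policy_kernel \<pi> p s y * value_fun \<gamma> r \<pi> p y)"
    by (simp add: sum_distrib_left mult.assoc)
  finally show ?thesis .
qed

section \<open>Acyclic MDPs\<close>

lemma sum_mult_cong_nonzero:
  fixes q f g :: "'s \<Rightarrow> 'b::semiring_0"
  assumes "\<And>y. y \<in> A \<Longrightarrow> q y \<noteq> 0 \<Longrightarrow> f y = g y"
  shows "(\<Sum>y\<in>A. q y * f y) = (\<Sum>y\<in>A. q y * g y)"
proof (rule sum.cong)
  show "q y * f y = q y * g y" if "y \<in> A" for y
    using assms[OF that] by (cases "q y = 0") simp_all
qed simp

lemma transition_eq_0_if_loop:
  assumes "is_transition p" "p x a x = 1" "y \<noteq> x"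
  shows "p x a y = 0"
proof -
  have nonneg: "0 \<le> p x a z" for z using assms(1) by (simp add: is_transition_def)
  have "p x a x + p x a y = (\<Sum>z\<in>{x, y}. p x a z)" using assms(3) by simp
  also have "\<dots> \<le> (\<Sum>z\<in>UNIV. p x a z)" by (rule sum_mono2) (auto intro: nonneg)
  also have "\<dots> = 1" using assms(1) by (simp add: is_transition_def)
  finally show ?thesis using assms(2) nonneg[of y] by linarith
qed

context
  fixes T :: "'s::finite set" and rk :: "'s \<Rightarrow> nat" and r :: "'s \<Rightarrow> 'a::finite \<Rightarrow> real"
    and p :: "'s \<Rightarrow> 'a \<Rightarrow> 's \<Rightarrow> real"
  assumes acyclic: "acyclic_mdp T rk r p" and transition: "is_transition p"
begin

lemma acyclic_transition_terminal: "x \<in> T \<Longrightarrow> y \<noteq> x \<Longrightarrow> p x a y = 0"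
  using acyclic transition transition_eq_0_if_loop unfolding acyclic_mdp_def by blast

lemma acyclic_transition_nonterminal: "x \<notin> T \<Longrightarrow> \<not> rk y < rk x \<Longrightarrow> p x a y = 0"
  using acyclic transition unfolding acyclic_mdp_def is_transition_def
  by (metis order_less_le)

lemma acyclic_transition_rank_le:
  assumes "p x a y \<noteq> 0"
  shows "rk y \<le> rk x"
proof (cases "x \<in> T")
  case True
  then show ?thesis using acyclic_transition_terminal assms by fastforce
next
  case False
  then show ?thesis using acyclic_transition_nonterminal assms by (meson less_imp_le)
qed

lemma state_dist_rank_le: "state_dist \<pi> p s h y \<noteq> 0 \<Longrightarrow> rk y \<le> rk s"
proof (induction h arbitrary: y)
  case (Suc h)
  then obtain x where "state_dist \<pi> p s h x * policy_kernel \<pi> p x y \<noteq> 0"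
    unfolding state_dist_Suc_last_step by (meson sum.not_neutral_contains_not_neutral)
  then have "state_dist \<pi> p s h x \<noteq> 0" "policy_kernel \<pi> p x y \<noteq> 0" by auto
  from this(2) obtain a where "\<pi> x a * p x a y \<noteq> 0"
    unfolding policy_kernel_def by (meson sum.not_neutral_contains_not_neutral)
  then have "p x a y \<noteq> 0" by simp
  then have "rk y \<le> rk x" by (rule acyclic_transition_rank_le)
  also have "rk x \<le> rk s" by (rule Suc.IH) fact
  finally show ?case .
qed (simp split: if_splits)

lemma state_dist_cong_below_rank:
  assumes agree: "\<And>x. rk x \<le> rk s \<Longrightarrow> p' x = p x"
  shows "state_dist \<pi> p' s h = state_dist \<pi> p s h"
proof (induction h)
  case (Suc h)
  have "policy_kernel \<pi> p' x = policy_kernel \<pi> p x" if "state_dist \<pi> p s h x \<noteq> 0" for x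
    using agree[OF state_dist_rank_le[OF that]] by (simp add: policy_kernel_def fun_eq_iff)
  then have "state_dist \<pi> p s h x * policy_kernel \<pi> p' x y
      = state_dist \<pi> p s h x * policy_kernel \<pi> p x y" for x y
    by (metis mult_zero_left)
  then show ?case by (intro ext) (simp only: state_dist_Suc_last_step Suc.IH)
qed simp

lemma value_fun_cong_below_rank:
  assumes "\<And>x. rk x \<le> rk s \<Longrightarrow> p' x = p x"
  shows "value_fun \<gamma> r' \<pi> p' s = value_fun \<gamma> r' \<pi> p s"
  by (simp add: value_fun_def state_dist_cong_below_rank[OF assms])

lemma policy_kernel_nonterminal: "x \<notin> T \<Longrightarrow> \<not> rk y < rk x \<Longrightarrow> policy_kernel \<pi> p x y = 0"
  by (simp add: policy_kernel_def acyclic_transition_nonterminal)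

lemma value_fun_fun_upd_below_rank:
  "rk y < rk s \<Longrightarrow> value_fun \<gamma> r' \<pi> (p(s := c)) y = value_fun \<gamma> r' \<pi> p y"
  by (rule value_fun_cong_below_rank) auto

lemma bellman_equation_fun_upd:
  assumes "is_policy \<pi>" "0 \<le> \<gamma>" "\<gamma> < 1" "s \<notin> T"
  shows "value_fun \<gamma> r' \<pi> p s
    = policy_reward \<pi> r' s + \<gamma> * (\<Sum>y\<in>UNIV. policy_kernel \<pi> p s y * value_fun \<gamma> r' \<pi> (p(s := c)) y)"
proof -
  have "value_fun \<gamma> r' \<pi> p s
      = policy_reward \<pi> r' s + \<gamma> * (\<Sum>y\<in>UNIV. policy_kernel \<pi> p s y * value_fun \<gamma> r' \<pi> p y)"
    by (rule bellman_equation[OF assms(1) transition assms(2,3)])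
  also have "(\<Sum>y\<in>UNIV. policy_kernel \<pi> p s y * value_fun \<gamma> r' \<pi> p y)
      = (\<Sum>y\<in>UNIV. policy_kernel \<pi> p s y * value_fun \<gamma> r' \<pi> (p(s := c)) y)"
    by (intro sum_mult_cong_nonzero value_fun_fun_upd_below_rank[symmetric])
       (meson policy_kernel_nonterminal assms(4))
  finally show ?thesis .
qed

lemma value_fun_terminal:
  assumes "is_policy \<pi>" "0 \<le> \<gamma>" "\<gamma> < 1" "s \<in> T"
  shows "value_fun \<gamma> r \<pi> p s = 0"
proof -
  have reward: "policy_reward \<pi> r s = 0"
    using acyclic assms(4) by (simp add: acyclic_mdp_def policy_reward_def)
  have kernel: "policy_kernel \<pi> p s y = (if y = s then 1 else 0)" for y
  proof (cases "y = s")
    case True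
    then show ?thesis
      using acyclic assms(1,4) by (simp add: acyclic_mdp_def policy_kernel_def is_policy_def)
  next
    case False
    then show ?thesis
      using acyclic_transition_terminal[OF assms(4) False] by (simp add: policy_kernel_def)
  qed
  have next_value: "(\<Sum>y\<in>UNIV. policy_kernel \<pi> p s y * value_fun \<gamma> r \<pi> p y) = value_fun \<gamma> r \<pi> p s"
    by (simp add: kernel if_distrib[of "\<lambda>t. t * _"] cong: if_cong)
  have "value_fun \<gamma> r \<pi> p s = \<gamma> * value_fun \<gamma> r \<pi> p s"
    using bellman_equation[OF assms(1) transition assms(2,3), of r s] unfolding reward next_value
    by (metis add_0)
  then show ?thesis using assms(3) by (metis mult_cancel_right1 less_irrefl)
qed

end

section \<open>Measurability and independence of the rows\<close>

abbreviation row_space :: "('a \<Rightarrow> 's \<Rightarrow> real) measure"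
  where "row_space \<equiv> Pi\<^sub>M UNIV (\<lambda>_. Pi\<^sub>M UNIV (\<lambda>_. borel))"

lemma measurable_transition_entry:
  fixes x :: 'i and a :: 'a and y :: 's
  assumes "x \<in> I"
  shows "(\<lambda>p. p x a y) \<in> borel_measurable (Pi\<^sub>M I (\<lambda>_. row_space))"
proof -
  have row: "(\<lambda>p. p x) \<in> measurable (Pi\<^sub>M I (\<lambda>_. row_space)) row_space"
    using assms by (rule measurable_component_singleton)
  have action:
    "(\<lambda>f. f a) \<in> measurable (row_space :: ('a \<Rightarrow> 's \<Rightarrow> real) measure) (Pi\<^sub>M UNIV (\<lambda>_. borel))"
    by (rule measurable_component_singleton) simp
  have target: "(\<lambda>g. g y) \<in> borel_measurable (Pi\<^sub>M UNIV (\<lambda>_::'s. borel :: real measure))"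
    by (rule measurable_component_singleton) simp
  show ?thesis
    using measurable_comp[OF measurable_comp[OF row action] target] by (simp add: comp_def)
qed

lemmas measurable_transition_entry_UNIV [measurable] = measurable_transition_entry[OF UNIV_I]

lemma measurable_state_dist [measurable]:
  "(\<lambda>p. state_dist \<pi> p s h x)
    \<in> borel_measurable (Pi\<^sub>M UNIV (\<lambda>_::'s::finite. row_space :: ('a::finite \<Rightarrow> 's \<Rightarrow> real) measure))"
proof (induction h arbitrary: x)
  case (Suc h)
  then show ?case unfolding state_dist_Suc_last_step policy_kernel_def by measurable
qed simp

lemma measurable_value_fun [measurable]:
  "(\<lambda>p. value_fun \<gamma> r \<pi> p s)
    \<in> borel_measurable (Pi\<^sub>M UNIV (\<lambda>_::'s::finite. row_space :: ('a::finite \<Rightarrow> 's \<Rightarrow> real) measure))"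
  unfolding value_fun_def by measurable

lemma measurable_policy_kernel_row:
  "s \<in> I \<Longrightarrow> (\<lambda>p. policy_kernel \<pi> p s) \<in> measurable (Pi\<^sub>M I (\<lambda>_. row_space)) (Pi\<^sub>M UNIV (\<lambda>_. borel))"
  unfolding policy_kernel_def
  by (rule measurable_PiM_single')
     (auto intro!: borel_measurable_sum borel_measurable_times measurable_transition_entry
           simp: space_PiM)

lemma measurable_fun_upd_row:
  "(\<lambda>p. p(s := c)) \<in> measurable (Pi\<^sub>M (UNIV - {s}) (\<lambda>_. row_space)) (Pi\<^sub>M UNIV (\<lambda>_. row_space))"
proof (rule measurable_PiM_single')
  fix x
  show "(\<lambda>p. (p(s := c)) x) \<in> measurable (Pi\<^sub>M (UNIV - {s}) (\<lambda>_. row_space)) row_space"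
    by (cases "x = s") (auto intro: measurable_component_singleton measurable_const simp: space_PiM)
qed (auto simp: space_PiM)

lemma (in prob_space) indep_var_policy_kernel_value_fun_upd:
  fixes P :: "'a \<Rightarrow> 's::finite \<Rightarrow> 'b::finite \<Rightarrow> 's \<Rightarrow> real"
  assumes "indep_vars (\<lambda>_. row_space) (\<lambda>x \<omega>. P \<omega> x) UNIV"
  shows "indep_var (Pi\<^sub>M UNIV (\<lambda>_. borel)) (\<lambda>\<omega>. policy_kernel \<pi> (P \<omega>) s)
    (Pi\<^sub>M UNIV (\<lambda>_. borel)) (\<lambda>\<omega> y. value_fun \<gamma> r \<pi> ((P \<omega>)(s := c)) y)"
proof -
  define row where "row \<omega> = restrict (\<lambda>x. P \<omega> x) {s}" for \<omega>
  define rest where "rest \<omega> = restrict (\<lambda>x. P \<omega> x) (UNIV - {s})" for \<omega>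
  have "indep_var (Pi\<^sub>M {s} (\<lambda>_. row_space)) row (Pi\<^sub>M (UNIV - {s}) (\<lambda>_. row_space)) rest"
    unfolding row_def rest_def by (rule indep_var_restrict[OF assms]) auto
  moreover have "(\<lambda>p y. value_fun \<gamma> r \<pi> (p(s := c)) y)
      \<in> measurable (Pi\<^sub>M (UNIV - {s}) (\<lambda>_. row_space)) (Pi\<^sub>M UNIV (\<lambda>_. borel))"
    by (rule measurable_PiM_single')
       (auto intro: measurable_comp[OF measurable_fun_upd_row measurable_value_fun, unfolded comp_def]
             simp: space_PiM)
  ultimately have "indep_var (Pi\<^sub>M UNIV (\<lambda>_. borel)) ((\<lambda>p. policy_kernel \<pi> p s) \<circ> row)
      (Pi\<^sub>M UNIV (\<lambda>_. borel)) ((\<lambda>p y. value_fun \<gamma> r \<pi> (p(s := c)) y) \<circ> rest)"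
    by (rule indep_var_compose[OF _ measurable_policy_kernel_row[OF singletonI]])
  moreover have "policy_kernel \<pi> (row \<omega>) s = policy_kernel \<pi> (P \<omega>) s" for \<omega>
    by (simp add: row_def policy_kernel_def fun_eq_iff)
  moreover have "(rest \<omega>)(s := c) = (P \<omega>)(s := c)" for \<omega>
    by (auto simp: rest_def fun_eq_iff)
  ultimately show ?thesis by (simp add: comp_def)
qed

section \<open>Variances of bounded random variables\<close>

definition bounded_on :: "'w measure \<Rightarrow> ('w \<Rightarrow> real) \<Rightarrow> bool"
  where "bounded_on M f \<longleftrightarrow> (\<exists>C. \<forall>\<omega>\<in>space M. \<bar>f \<omega>\<bar> \<le> C)"

lemma bounded_on_const: "bounded_on M (\<lambda>\<omega>. c)"
  unfolding bounded_on_def by auto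

lemma bounded_on_add: "bounded_on M f \<Longrightarrow> bounded_on M g \<Longrightarrow> bounded_on M (\<lambda>\<omega>. f \<omega> + g \<omega>)"
  unfolding bounded_on_def by (metis abs_triangle_ineq add_mono order_trans)

lemma bounded_on_diff: "bounded_on M f \<Longrightarrow> bounded_on M g \<Longrightarrow> bounded_on M (\<lambda>\<omega>. f \<omega> - g \<omega>)"
  unfolding bounded_on_def by (metis abs_triangle_ineq4 add_mono order_trans)

lemma bounded_on_mult:
  assumes "bounded_on M f" "bounded_on M g"
  shows "bounded_on M (\<lambda>\<omega>. f \<omega> * g \<omega>)"
proof -
  obtain C D where "\<forall>\<omega>\<in>space M. \<bar>f \<omega>\<bar> \<le> C" "\<forall>\<omega>\<in>space M. \<bar>g \<omega>\<bar> \<le> D"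
    using assms unfolding bounded_on_def by blast
  then have "\<forall>\<omega>\<in>space M. \<bar>f \<omega> * g \<omega>\<bar> \<le> C * D"
    by (auto simp: abs_mult intro!: mult_mono)
  then show ?thesis unfolding bounded_on_def by blast
qed

lemma bounded_on_sum:
  "(\<And>i. i \<in> I \<Longrightarrow> bounded_on M (f i)) \<Longrightarrow> bounded_on M (\<lambda>\<omega>. \<Sum>i\<in>I. f i \<omega>)"
  by (induction I rule: infinite_finite_induct) (auto intro: bounded_on_const bounded_on_add)

lemma bounded_on_power2: "bounded_on M f \<Longrightarrow> bounded_on M (\<lambda>\<omega>. (f \<omega>)\<^sup>2)"
  unfolding power2_eq_square by (rule bounded_on_mult)

lemmas bounded_on_intros =
  bounded_on_const bounded_on_add bounded_on_diff bounded_on_mult bounded_on_sum bounded_on_power2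

lemma (in finite_measure) integrable_bounded_on:
  assumes "f \<in> borel_measurable M" "bounded_on M f"
  shows "integrable M f"
proof -
  obtain C where "\<forall>\<omega>\<in>space M. \<bar>f \<omega>\<bar> \<le> C" using assms(2) unfolding bounded_on_def by blast
  then show ?thesis by (intro integrable_const_bound[where B = C] assms(1) AE_I2) auto
qed

lemma var_of_cong:
  assumes "\<And>\<omega>. \<omega> \<in> space M \<Longrightarrow> f \<omega> = g \<omega>"
  shows "var_of M f = var_of M g"
proof -
  have "(\<integral>\<omega>. f \<omega> \<partial>M) = (\<integral>\<omega>. g \<omega> \<partial>M)"
    by (rule Bochner_Integration.integral_cong) (simp_all add: assms)
  then show ?thesis
    unfolding var_of_def by (intro Bochner_Integration.integral_cong) (simp_all add: assms)
qed

lemma var_of_nonneg: "0 \<le> var_of M f"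
  unfolding var_of_def by simp

lemma (in prob_space) var_of_affine:
  assumes "integrable M f"
  shows "var_of M (\<lambda>\<omega>. c + b * f \<omega>) = b\<^sup>2 * var_of M f"
proof -
  have "(\<integral>\<omega>. c + b * f \<omega> \<partial>M) = c + b * (\<integral>\<omega>. f \<omega> \<partial>M)"
    using assms by (simp add: prob_space)
  then have "var_of M (\<lambda>\<omega>. c + b * f \<omega>) = (\<integral>\<omega>. b\<^sup>2 * (f \<omega> - (\<integral>\<omega>. f \<omega> \<partial>M))\<^sup>2 \<partial>M)"
    unfolding var_of_def
    by (intro Bochner_Integration.integral_cong) (simp_all add: power2_eq_square algebra_simps)
  then show ?thesis unfolding var_of_def by simp
qed

lemma (in prob_space) var_of_add_uncorrelated:
  assumes [measurable]: "Y \<in> borel_measurable M" "Z \<in> borel_measurable M"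
    and bounded: "bounded_on M Y" "bounded_on M Z"
    and centered: "expectation Z = 0"
    and uncorrelated: "expectation (\<lambda>\<omega>. (Y \<omega> - expectation Y) * Z \<omega>) = 0"
  shows "var_of M (\<lambda>\<omega>. Y \<omega> + Z \<omega>) = var_of M Y + expectation (\<lambda>\<omega>. (Z \<omega>)\<^sup>2)"
proof -
  have integrable: "integrable M f" if "f \<in> borel_measurable M" "bounded_on M f" for f
    using integrable_bounded_on that .
  have "expectation (\<lambda>\<omega>. Y \<omega> + Z \<omega>) = expectation Y"
    using centered bounded by (simp add: integrable)
  then have "var_of M (\<lambda>\<omega>. Y \<omega> + Z \<omega>)
      = expectation (\<lambda>\<omega>. (Y \<omega> - expectation Y)\<^sup>2 + 2 * ((Y \<omega> - expectation Y) * Z \<omega>) + (Z \<omega>)\<^sup>2)"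
    unfolding var_of_def by (simp add: power2_eq_square algebra_simps)
  also have "\<dots> = var_of M Y + 2 * expectation (\<lambda>\<omega>. (Y \<omega> - expectation Y) * Z \<omega>)
      + expectation (\<lambda>\<omega>. (Z \<omega>)\<^sup>2)"
    using bounded unfolding var_of_def by (simp add: integrable bounded_on_intros)
  finally show ?thesis using uncorrelated by simp
qed

lemma (in prob_space) integral_indep_var_mult:
  assumes indep: "indep_var N1 X N2 Y"
    and [measurable]: "F \<in> borel_measurable N1" "G \<in> borel_measurable N2"
    and bounded: "bounded_on M (\<lambda>\<omega>. F (X \<omega>))" "bounded_on M (\<lambda>\<omega>. G (Y \<omega>))"
  shows "expectation (\<lambda>\<omega>. F (X \<omega>) * G (Y \<omega>))
    = expectation (\<lambda>\<omega>. F (X \<omega>)) * expectation (\<lambda>\<omega>. G (Y \<omega>))"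
proof -
  have [measurable]: "X \<in> measurable M N1" "Y \<in> measurable M N2"
    using indep_var_rv1[OF indep] indep_var_rv2[OF indep] .
  have "integrable M (F \<circ> X)" "integrable M (G \<circ> Y)"
    using bounded by (auto intro!: integrable_bounded_on simp: comp_def)
  with indep_var_lebesgue_integral[OF indep_var_compose[OF indep assms(2,3)]] show ?thesis
    by (simp add: comp_def)
qed

context prob_space
begin

context
  fixes q V :: "'a \<Rightarrow> 's::finite \<Rightarrow> real" and B :: real
  assumes indep: "indep_var (Pi\<^sub>M UNIV (\<lambda>_. borel)) q (Pi\<^sub>M UNIV (\<lambda>_. borel)) V"
    and q_nonneg: "\<And>\<omega> y. \<omega> \<in> space M \<Longrightarrow> 0 \<le> q \<omega> y"
    and q_sum: "\<And>\<omega>. \<omega> \<in> space M \<Longrightarrow> (\<Sum>y\<in>UNIV. q \<omega> y) = 1"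
    and V_bounded: "\<And>\<omega> y. \<omega> \<in> space M \<Longrightarrow> \<bar>V \<omega> y\<bar> \<le> B"
begin

lemma measurable_mixture [measurable]:
  "q \<in> measurable M (Pi\<^sub>M UNIV (\<lambda>_. borel))" "V \<in> measurable M (Pi\<^sub>M UNIV (\<lambda>_. borel))"
  using indep_var_rv1[OF indep] indep_var_rv2[OF indep] .

lemma bounded_on_mixture: "bounded_on M (\<lambda>\<omega>. q \<omega> y)" "bounded_on M (\<lambda>\<omega>. V \<omega> y)"
proof -
  have "q \<omega> y \<le> (\<Sum>y\<in>UNIV. q \<omega> y)" if "\<omega> \<in> space M" for \<omega>
    by (rule member_le_sum) (simp_all add: q_nonneg that)
  then show "bounded_on M (\<lambda>\<omega>. q \<omega> y)"
    unfolding bounded_on_def using q_nonneg q_sum by (metis abs_of_nonneg)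
  show "bounded_on M (\<lambda>\<omega>. V \<omega> y)"
    unfolding bounded_on_def using V_bounded by blast
qed

lemma expectation_mult_deviation_eq_0:
  assumes [measurable]: "G \<in> borel_measurable (Pi\<^sub>M UNIV (\<lambda>_. borel))"
    and "bounded_on M (\<lambda>\<omega>. G (q \<omega>))"
  shows "expectation (\<lambda>\<omega>. G (q \<omega>) * (V \<omega> y - expectation (\<lambda>\<omega>. V \<omega> y))) = 0"
proof -
  define m where "m = expectation (\<lambda>\<omega>. V \<omega> y)"
  have "expectation (\<lambda>\<omega>. G (q \<omega>) * (V \<omega> y - m))
      = expectation (\<lambda>\<omega>. G (q \<omega>)) * expectation (\<lambda>\<omega>. V \<omega> y - m)"
  proof (rule integral_indep_var_mult[OF indep assms(1)])
    show "(\<lambda>v. v y - m) \<in> borel_measurable (Pi\<^sub>M UNIV (\<lambda>_. borel))" by measurable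
    show "bounded_on M (\<lambda>\<omega>. V \<omega> y - m)" by (intro bounded_on_intros bounded_on_mixture)
  qed fact
  also have "expectation (\<lambda>\<omega>. V \<omega> y - m) = 0"
    using integrable_bounded_on[OF _ bounded_on_mixture(2)] by (simp add: prob_space m_def)
  finally show ?thesis unfolding m_def by simp
qed

lemma expectation_mult_weighted_deviation_eq_0:
  assumes [measurable]: "G \<in> borel_measurable (Pi\<^sub>M UNIV (\<lambda>_. borel))"
    and bounded: "bounded_on M (\<lambda>\<omega>. G (q \<omega>))"
  shows "expectation (\<lambda>\<omega>. G (q \<omega>) * (\<Sum>y\<in>UNIV. q \<omega> y * (V \<omega> y - expectation (\<lambda>\<omega>. V \<omega> y)))) = 0"
proof -
  define m where "m y = expectation (\<lambda>\<omega>. V \<omega> y)" for y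
  have "expectation (\<lambda>\<omega>. G (q \<omega>) * (\<Sum>y\<in>UNIV. q \<omega> y * (V \<omega> y - m y)))
      = (\<Sum>y\<in>UNIV. expectation (\<lambda>\<omega>. (G (q \<omega>) * q \<omega> y) * (V \<omega> y - m y)))"
    unfolding sum_distrib_left mult.assoc
    by (intro Bochner_Integration.integral_sum integrable_bounded_on)
       (measurable, intro bounded_on_intros bounded bounded_on_mixture)
  also have "\<dots> = 0"
    using expectation_mult_deviation_eq_0[where G = "\<lambda>f. G f * f _"] bounded
    by (simp add: m_def bounded_on_intros bounded_on_mixture)
  finally show ?thesis unfolding m_def .
qed

lemma expectation_square_weighted_deviation_le:
  "expectation (\<lambda>\<omega>. (\<Sum>y\<in>UNIV. q \<omega> y * (V \<omega> y - expectation (\<lambda>\<omega>. V \<omega> y)))\<^sup>2)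
    \<le> (\<Sum>y\<in>UNIV. expectation (\<lambda>\<omega>. q \<omega> y) * var_of M (\<lambda>\<omega>. V \<omega> y))"
proof -
  define D where "D \<omega> y = V \<omega> y - expectation (\<lambda>\<omega>. V \<omega> y)" for \<omega> y
  have [measurable]: "(\<lambda>\<omega>. D \<omega> y) \<in> borel_measurable M" for y unfolding D_def by measurable
  have bounded: "bounded_on M (\<lambda>\<omega>. D \<omega> y)" for y
    unfolding D_def by (intro bounded_on_intros bounded_on_mixture)
  have "integrable M (\<lambda>\<omega>. (\<Sum>y\<in>UNIV. q \<omega> y * D \<omega> y)\<^sup>2)"
    by (rule integrable_bounded_on) (measurable, intro bounded_on_intros bounded bounded_on_mixture)
  moreover have "integrable M (\<lambda>\<omega>. \<Sum>y\<in>UNIV. q \<omega> y * (D \<omega> y)\<^sup>2)"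
    by (rule integrable_bounded_on) (measurable, intro bounded_on_intros bounded bounded_on_mixture)
  moreover have "(\<Sum>y\<in>UNIV. q \<omega> y * D \<omega> y)\<^sup>2 \<le> (\<Sum>y\<in>UNIV. q \<omega> y * (D \<omega> y)\<^sup>2)"
    if "\<omega> \<in> space M" for \<omega>
    using convex_on_sum[OF finite UNIV_not_empty convex_power2, of "q \<omega>" "D \<omega>"]
    by (simp add: q_sum q_nonneg that)
  ultimately have "expectation (\<lambda>\<omega>. (\<Sum>y\<in>UNIV. q \<omega> y * D \<omega> y)\<^sup>2)
      \<le> expectation (\<lambda>\<omega>. \<Sum>y\<in>UNIV. q \<omega> y * (D \<omega> y)\<^sup>2)"
    by (rule integral_mono)
  also have "\<dots> = (\<Sum>y\<in>UNIV. expectation (\<lambda>\<omega>. q \<omega> y * (D \<omega> y)\<^sup>2))"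
    by (intro Bochner_Integration.integral_sum integrable_bounded_on)
       (measurable, intro bounded_on_intros bounded bounded_on_mixture)
  also have "\<dots> = (\<Sum>y\<in>UNIV. expectation (\<lambda>\<omega>. q \<omega> y) * var_of M (\<lambda>\<omega>. V \<omega> y))"
  proof (intro sum.cong refl)
    fix y
    show "expectation (\<lambda>\<omega>. q \<omega> y * (D \<omega> y)\<^sup>2) = expectation (\<lambda>\<omega>. q \<omega> y) * var_of M (\<lambda>\<omega>. V \<omega> y)"
      unfolding D_def var_of_def
    proof (rule integral_indep_var_mult[OF indep])
      show "(\<lambda>v. (v y - expectation (\<lambda>\<omega>. V \<omega> y))\<^sup>2) \<in> borel_measurable (Pi\<^sub>M UNIV (\<lambda>_. borel))"
        by measurable
    qed (measurable, (intro bounded_on_intros bounded_on_mixture)+)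
  qed
  finally show ?thesis unfolding D_def .
qed

text \<open>The law of total variance, conditioning on \<open>q\<close>, with Jensen's inequality for the
  conditional part.\<close>

lemma var_of_mixture_le:
  "var_of M (\<lambda>\<omega>. \<Sum>y\<in>UNIV. q \<omega> y * V \<omega> y)
    \<le> var_of M (\<lambda>\<omega>. \<Sum>y\<in>UNIV. q \<omega> y * expectation (\<lambda>\<omega>. V \<omega> y))
      + (\<Sum>y\<in>UNIV. expectation (\<lambda>\<omega>. q \<omega> y) * var_of M (\<lambda>\<omega>. V \<omega> y))"
proof -
  define m where "m y = expectation (\<lambda>\<omega>. V \<omega> y)" for y
  define Y where "Y = (\<lambda>\<omega>. \<Sum>y\<in>UNIV. q \<omega> y * m y)"
  define Z where "Z = (\<lambda>\<omega>. \<Sum>y\<in>UNIV. q \<omega> y * (V \<omega> y - m y))"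
  define EY where "EY = expectation Y"
  have [measurable]: "Y \<in> borel_measurable M" "Z \<in> borel_measurable M"
    unfolding Y_def Z_def by measurable
  have bounded: "bounded_on M Y" "bounded_on M Z"
    unfolding Y_def Z_def by (intro bounded_on_intros bounded_on_mixture)+
  have "expectation Z = 0"
    using expectation_mult_weighted_deviation_eq_0[OF measurable_const bounded_on_const, of 1]
    by (simp add: Z_def m_def space_PiM)
  moreover have "expectation (\<lambda>\<omega>. (Y \<omega> - EY) * Z \<omega>) = 0"
  proof -
    have "(\<lambda>f. (\<Sum>y\<in>UNIV. f y * m y) - EY) \<in> borel_measurable (Pi\<^sub>M UNIV (\<lambda>_. borel))"
      by measurable
    moreover have "bounded_on M (\<lambda>\<omega>. (\<Sum>y\<in>UNIV. q \<omega> y * m y) - EY)"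
      by (intro bounded_on_intros bounded_on_mixture)
    ultimately show ?thesis
      using expectation_mult_weighted_deviation_eq_0 unfolding Y_def Z_def m_def by blast
  qed
  ultimately have "var_of M (\<lambda>\<omega>. Y \<omega> + Z \<omega>) = var_of M Y + expectation (\<lambda>\<omega>. (Z \<omega>)\<^sup>2)"
    unfolding EY_def by (intro var_of_add_uncorrelated bounded) measurable
  moreover have "(\<lambda>\<omega>. Y \<omega> + Z \<omega>) = (\<lambda>\<omega>. \<Sum>y\<in>UNIV. q \<omega> y * V \<omega> y)"
    unfolding Y_def Z_def by (simp add: right_diff_distrib sum_subtractf)
  ultimately show ?thesis
    using expectation_square_weighted_deviation_le unfolding Y_def Z_def m_def by simp
qed

lemma var_of_affine_mixture_le:
  "var_of M (\<lambda>\<omega>. c + b * (\<Sum>y\<in>UNIV. q \<omega> y * V \<omega> y))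
    \<le> b\<^sup>2 * (var_of M (\<lambda>\<omega>. \<Sum>y\<in>UNIV. q \<omega> y * expectation (\<lambda>\<omega>. V \<omega> y))
      + (\<Sum>y\<in>UNIV. expectation (\<lambda>\<omega>. q \<omega> y) * var_of M (\<lambda>\<omega>. V \<omega> y)))"
proof -
  have "integrable M (\<lambda>\<omega>. \<Sum>y\<in>UNIV. q \<omega> y * V \<omega> y)"
    by (rule integrable_bounded_on) (measurable, intro bounded_on_intros bounded_on_mixture)
  then show ?thesis using var_of_mixture_le by (simp add: var_of_affine mult_left_mono)
qed
end

end

section \<open>The one-step variance inequality\<close>

context prob_space
begin

context
  fixes P :: "'a \<Rightarrow> 's::finite \<Rightarrow> 'b::finite \<Rightarrow> 's \<Rightarrow> real"
  assumes measurable_P: "\<And>x a y. (\<lambda>\<omega>. P \<omega> x a y) \<in> borel_measurable M"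
    and transition_P: "\<forall>\<omega>\<in>space M. is_transition (P \<omega>)"
begin

lemma integrable_transition_entry: "integrable M (\<lambda>\<omega>. P \<omega> x a y)"
proof (rule integrable_bounded_on[OF measurable_P])
  have "\<bar>P \<omega> x a y\<bar> \<le> 1" if "\<omega> \<in> space M" for \<omega>
  proof -
    have "is_transition (P \<omega>)" using transition_P that by blast
    then show ?thesis using transition_le_1 by (auto simp: is_transition_def)
  qed
  then show "bounded_on M (\<lambda>\<omega>. P \<omega> x a y)" unfolding bounded_on_def by blast
qed

lemma is_transition_mean_trans: "is_transition (mean_trans M P)"
  unfolding is_transition_def
proof (intro allI conjI)
  show "0 \<le> mean_trans M P x a y" for x a y
    unfolding mean_trans_def using transition_P by (auto simp: is_transition_def)
  fix x a
  have "(\<Sum>y\<in>UNIV. mean_trans M P x a y) = expectation (\<lambda>\<omega>. \<Sum>y\<in>UNIV. P \<omega> x a y)"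
    unfolding mean_trans_def by (simp add: integrable_transition_entry)
  also have "\<dots> = expectation (\<lambda>_. 1 :: real)"
    using transition_P by (intro Bochner_Integration.integral_cong) (auto simp: is_transition_def)
  finally show "(\<Sum>y\<in>UNIV. mean_trans M P x a y) = 1" by (simp add: prob_space)
qed

lemma expectation_policy_kernel:
  "expectation (\<lambda>\<omega>. policy_kernel \<pi> (P \<omega>) s y) = policy_kernel \<pi> (mean_trans M P) s y"
  unfolding policy_kernel_def mean_trans_def by (simp add: integrable_transition_entry)

end

text \<open>Replacing the row of \<open>s\<close> by a fixed row (any transition row would do) makes the values
  at states of lower rank independent of the row of \<open>s\<close>, and by acyclicity it does not change them.\<close>

context
  fixes P :: "'a \<Rightarrow> 's::finite \<Rightarrow> 'b::finite \<Rightarrow> 's \<Rightarrow> real"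
    and T :: "'s set" and rk :: "'s \<Rightarrow> nat" and r :: "'s \<Rightarrow> 'b \<Rightarrow> real" and \<gamma> :: real
    and \<pi> :: "'s \<Rightarrow> 'b \<Rightarrow> real" and s :: 's
  assumes gamma: "0 \<le> \<gamma>" "\<gamma> < 1"
    and measurable_P: "\<And>x a y. (\<lambda>\<omega>. P \<omega> x a y) \<in> borel_measurable M"
    and transition_P: "\<forall>\<omega>\<in>space M. is_transition (P \<omega>)"
    and indep: "indep_vars (\<lambda>_. row_space) (\<lambda>x \<omega>. P \<omega> x) UNIV"
    and acyclic: "\<forall>\<omega>\<in>space M. acyclic_mdp T rk r (P \<omega>)"
    and policy: "is_policy \<pi>"
    and not_terminal: "s \<notin> T"
begin

lemma policy_kernel_support: "\<omega> \<in> space M \<Longrightarrow> policy_kernel \<pi> (P \<omega>) s y \<noteq> 0 \<Longrightarrow> rk y < rk s"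
  using policy_kernel_nonterminal[OF _ _ not_terminal] acyclic transition_P by blast

lemma mean_policy_kernel_support: "policy_kernel \<pi> (mean_trans M P) s y \<noteq> 0 \<Longrightarrow> rk y < rk s"
  using policy_kernel_support
  unfolding expectation_policy_kernel[OF measurable_P transition_P, symmetric]
  by (metis (mono_tags, lifting) Bochner_Integration.integral_cong integral_zero)

lemma value_fun_mean_row_below_rank:
  "\<omega> \<in> space M \<Longrightarrow> rk y < rk s
    \<Longrightarrow> value_fun \<gamma> r \<pi> ((P \<omega>)(s := mean_trans M P s)) y = value_fun \<gamma> r \<pi> (P \<omega>) y"
  using value_fun_fun_upd_below_rank acyclic transition_P by blast

lemma local_unc_eq_var_mean_row:
  "var_of M (\<lambda>\<omega>. \<Sum>y\<in>UNIV. policy_kernel \<pi> (P \<omega>) s y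
      * expectation (\<lambda>\<omega>. value_fun \<gamma> r \<pi> ((P \<omega>)(s := mean_trans M P s)) y))
    = local_unc M P \<gamma> r \<pi> s"
proof -
  have "expectation (\<lambda>\<omega>. value_fun \<gamma> r \<pi> ((P \<omega>)(s := mean_trans M P s)) y) = mean_value M P \<gamma> r \<pi> y"
    if "rk y < rk s" for y
    unfolding mean_value_def using value_fun_mean_row_below_rank that
    by (intro Bochner_Integration.integral_cong) simp_all
  then show ?thesis
    unfolding local_unc_def sum_policy_kernel
    by (intro var_of_cong sum_mult_cong_nonzero) (auto dest: policy_kernel_support)
qed

lemma sum_var_mean_row_eq:
  "(\<Sum>y\<in>UNIV. expectation (\<lambda>\<omega>. policy_kernel \<pi> (P \<omega>) s y)
      * var_of M (\<lambda>\<omega>. value_fun \<gamma> r \<pi> ((P \<omega>)(s := mean_trans M P s)) y))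
    = (\<Sum>y\<in>UNIV. policy_kernel \<pi> (mean_trans M P) s y * value_var M P \<gamma> r \<pi> y)"
  unfolding expectation_policy_kernel[OF measurable_P transition_P] value_var_def
  using value_fun_mean_row_below_rank mean_policy_kernel_support
  by (intro sum_mult_cong_nonzero var_of_cong) auto

lemma value_var_le_one_step_nonterminal:
  "value_var M P \<gamma> r \<pi> s \<le> \<gamma>\<^sup>2 * local_unc M P \<gamma> r \<pi> s
    + \<gamma>\<^sup>2 * (\<Sum>y\<in>UNIV. policy_kernel \<pi> (mean_trans M P) s y * value_var M P \<gamma> r \<pi> y)"
proof -
  let ?p' = "\<lambda>\<omega>. (P \<omega>)(s := mean_trans M P s)"
  have transition_p': "is_transition (?p' \<omega>)" if "\<omega> \<in> space M" for \<omega>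
    using transition_P that is_transition_mean_trans[OF measurable_P transition_P]
    by (auto simp: is_transition_def)
  have "value_var M P \<gamma> r \<pi> s = var_of M (\<lambda>\<omega>. policy_reward \<pi> r s
      + \<gamma> * (\<Sum>y\<in>UNIV. policy_kernel \<pi> (P \<omega>) s y * value_fun \<gamma> r \<pi> (?p' \<omega>) y))"
    unfolding value_var_def
    using bellman_equation_fun_upd[OF _ _ policy gamma not_terminal] acyclic transition_P
    by (intro var_of_cong) blast
  also have "\<dots> \<le> \<gamma>\<^sup>2 * (var_of M (\<lambda>\<omega>. \<Sum>y\<in>UNIV. policy_kernel \<pi> (P \<omega>) s y
        * expectation (\<lambda>\<omega>. value_fun \<gamma> r \<pi> (?p' \<omega>) y))
      + (\<Sum>y\<in>UNIV. expectation (\<lambda>\<omega>. policy_kernel \<pi> (P \<omega>) s y)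
        * var_of M (\<lambda>\<omega>. value_fun \<gamma> r \<pi> (?p' \<omega>) y)))"
  proof (rule var_of_affine_mixture_le)
    show "indep_var (Pi\<^sub>M UNIV (\<lambda>_. borel)) (\<lambda>\<omega>. policy_kernel \<pi> (P \<omega>) s)
        (Pi\<^sub>M UNIV (\<lambda>_. borel)) (\<lambda>\<omega> y. value_fun \<gamma> r \<pi> (?p' \<omega>) y)"
      by (rule indep_var_policy_kernel_value_fun_upd[OF indep])
    show "0 \<le> policy_kernel \<pi> (P \<omega>) s y" "(\<Sum>y\<in>UNIV. policy_kernel \<pi> (P \<omega>) s y) = 1"
      if "\<omega> \<in> space M" for \<omega> y
      using transition_P that policy_kernel_nonneg[OF policy] sum_policy_kernel_eq_1[OF policy]
      by auto
    show "\<bar>value_fun \<gamma> r \<pi> (?p' \<omega>) y\<bar> \<le> (\<Sum>x\<in>UNIV. \<bar>policy_reward \<pi> r x\<bar>) / (1 - \<gamma>)"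
      if "\<omega> \<in> space M" for \<omega> y
      by (rule abs_value_fun_le[OF policy transition_p'[OF that] gamma])
  qed
  finally show ?thesis
    unfolding local_unc_eq_var_mean_row sum_var_mean_row_eq by (simp add: algebra_simps)
qed

end

end

lemma (in prob_space) value_var_le_one_step:
  fixes P :: "'a \<Rightarrow> 's::finite \<Rightarrow> 'b::finite \<Rightarrow> 's \<Rightarrow> real"
  assumes gamma: "0 \<le> \<gamma>" "\<gamma> < 1"
    and measurable_P: "\<And>x a y. (\<lambda>\<omega>. P \<omega> x a y) \<in> borel_measurable M"
    and transition_P: "\<forall>\<omega>\<in>space M. is_transition (P \<omega>)"
    and indep: "indep_vars (\<lambda>_. row_space) (\<lambda>x \<omega>. P \<omega> x) UNIV"
    and acyclic: "\<forall>\<omega>\<in>space M. acyclic_mdp T rk r (P \<omega>)"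
    and policy: "is_policy \<pi>"
  shows "value_var M P \<gamma> r \<pi> s \<le> \<gamma>\<^sup>2 * local_unc M P \<gamma> r \<pi> s
    + \<gamma>\<^sup>2 * (\<Sum>y\<in>UNIV. policy_kernel \<pi> (mean_trans M P) s y * value_var M P \<gamma> r \<pi> y)"
proof (cases "s \<in> T")
  case True
  have "value_var M P \<gamma> r \<pi> s = var_of M (\<lambda>_. 0)"
    unfolding value_var_def using value_fun_terminal[OF _ _ policy gamma True] acyclic transition_P
    by (intro var_of_cong) blast
  moreover have "0 \<le> (\<Sum>y\<in>UNIV. policy_kernel \<pi> (mean_trans M P) s y * value_var M P \<gamma> r \<pi> y)"
    using policy_kernel_nonneg[OF policy is_transition_mean_trans[OF measurable_P transition_P]]
    by (intro sum_nonneg mult_nonneg_nonneg) (simp_all add: value_var_def var_of_nonneg)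
  moreover have "0 \<le> local_unc M P \<gamma> r \<pi> s"
    by (simp add: local_unc_def var_of_nonneg)
  ultimately show ?thesis by (simp add: var_of_def)
next
  case False
  then show ?thesis by (rule value_var_le_one_step_nonterminal[OF assms])
qed

section \<open>A comparison principle\<close>

lemma discounted_comparison:
  fixes U W :: "'s::finite \<Rightarrow> real"
  assumes K_nonneg: "\<And>x y. 0 \<le> K x y" and K_sum: "\<And>x. (\<Sum>y\<in>UNIV. K x y) = 1"
    and c: "0 \<le> c" "c < 1"
    and sub: "\<And>x. U x \<le> f x + c * (\<Sum>y\<in>UNIV. K x y * U y)"
    and super: "\<And>x. f x + c * (\<Sum>y\<in>UNIV. K x y * W y) \<le> W x"
  shows "U x \<le> W x"
proof -
  define D where "D y = W y - U y" for y
  define m where "m = Min (range D)"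
  have m_le: "m \<le> D y" for y unfolding m_def by (rule Min_le) auto
  have "m \<in> range D" unfolding m_def by (rule Min_in) auto
  then obtain x0 where x0: "D x0 = m" by auto
  have "c * m = c * (\<Sum>y\<in>UNIV. K x0 y * m)"
    by (simp add: sum_distrib_right[symmetric] K_sum)
  also have "\<dots> \<le> c * (\<Sum>y\<in>UNIV. K x0 y * D y)"
    using c K_nonneg m_le by (intro mult_left_mono sum_mono) auto
  also have "\<dots> = c * (\<Sum>y\<in>UNIV. K x0 y * W y) - c * (\<Sum>y\<in>UNIV. K x0 y * U y)"
    by (simp add: D_def right_diff_distrib sum_subtractf)
  also have "\<dots> \<le> m" using sub[of x0] super[of x0] x0 by (simp add: D_def)
  finally have "0 \<le> (1 - c) * m" by (simp add: algebra_simps)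
  then have "0 \<le> m" using c by (simp add: zero_le_mult_iff)
  then show ?thesis using m_le[of x] by (simp add: D_def)
qed

theorem corollary1:
  fixes M :: "'w measure"
    and P :: "'w \<Rightarrow> 's::finite \<Rightarrow> 'a::finite \<Rightarrow> 's \<Rightarrow> real"
    and r :: "'s \<Rightarrow> 'a \<Rightarrow> real"
    and \<gamma> :: real
    and \<pi> :: "'s \<Rightarrow> 'a \<Rightarrow> real"
    and W :: "'s \<Rightarrow> real"
  assumes prob: "prob_space M"
    and gamma: "0 \<le> \<gamma>" "\<gamma> < 1"
    and meas: "\<And>s a s'. (\<lambda>\<omega>. P \<omega> s a s') \<in> borel_measurable M"
    and trans: "\<forall>\<omega>\<in>space M. is_transition (P \<omega>)"
    and A1: "prob_space.indep_vars M (\<lambda>_. Pi\<^sub>M UNIV (\<lambda>_. Pi\<^sub>M UNIV (\<lambda>_. borel)))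
               (\<lambda>x \<omega>. P \<omega> x) UNIV"
    and A2: "\<exists>T rk. \<forall>\<omega>\<in>space M. acyclic_mdp T rk r (P \<omega>)"
    and pol: "is_policy \<pi>"
    and W: "\<And>s. W s = \<gamma>\<^sup>2 * local_unc M P \<gamma> r \<pi> s
               + \<gamma>\<^sup>2 * (\<Sum>a\<in>UNIV. \<Sum>s'\<in>UNIV. \<pi> s a * mean_trans M P s a s' * W s')"
  shows "\<forall>s. value_var M P \<gamma> r \<pi> s \<le> W s"
proof
  fix s
  interpret prob_space M by (rule prob)
  obtain T rk where acyclic: "\<forall>\<omega>\<in>space M. acyclic_mdp T rk r (P \<omega>)" using A2 by blast
  have mean_trans: "is_transition (mean_trans M P)"
    by (rule is_transition_mean_trans[OF meas trans])
  show "value_var M P \<gamma> r \<pi> s \<le> W s"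
  proof (rule discounted_comparison[where K = "policy_kernel \<pi> (mean_trans M P)"])
    show "0 \<le> policy_kernel \<pi> (mean_trans M P) x y"
      and "(\<Sum>y\<in>UNIV. policy_kernel \<pi> (mean_trans M P) x y) = 1" for x y using pol mean_trans by (simp_all add: policy_kernel_nonneg sum_policy_kernel_eq_1)
    show "0 \<le> \<gamma>\<^sup>2" "\<gamma>\<^sup>2 < 1" using gamma by (simp_all add: power_less_one_iff)
    show "value_var M P \<gamma> r \<pi> x \<le> \<gamma>\<^sup>2 * local_unc M P \<gamma> r \<pi> x
        + \<gamma>\<^sup>2 * (\<Sum>y\<in>UNIV. policy_kernel \<pi> (mean_trans M P) x y * value_var M P \<gamma> r \<pi> y)" for x
      by (rule value_var_le_one_step[OF gamma meas trans A1 acyclic pol])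
    show "\<gamma>\<^sup>2 * local_unc M P \<gamma> r \<pi> x
        + \<gamma>\<^sup>2 * (\<Sum>y\<in>UNIV. policy_kernel \<pi> (mean_trans M P) x y * W y) \<le> W x" for x
      using W[of x] by (simp add: sum_policy_kernel)
  qed
qed

end
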